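(* Let $N'E_+(x,t):=\frac{\sqrt x}{2t}\exp\!\left(-\frac{x^2}{4t}\right)$ for $x,t>0$ and $(N'E_+*_tN'E_+)(x,t):=\int_0^tN'E_+(x,t-\tilde t)\,N'E_+(x,\tilde t)\,d\tilde t$. Then $$\int_0^1(N'E_+*_tN'E_+)(x,t)\,dx=\frac12+O(t^\infty),\qquad t\to0^+,$$ i.e. the difference is $O(t^N)$ for every $N$. *)

theory Defs
  imports "HOL-Analysis.Analysis" "HOL-Library.Landau_Symbols"
begin

definition NEp :: "real \<Rightarrow> real \<Rightarrow> real" where
  "NEp x t = sqrt x / (2 * t) * exp (- (x^2) / (4 * t))"

definition NEp_conv :: "real \<Rightarrow> real \<Rightarrow> real" where
  "NEp_conv x t = integral {0..t} (\<lambda>s. NEp x (t - s) * NEp x s)"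

end

theory Submission
  imports Defs "HOL-Real_Asymp.Real_Asymp"
begin

text \<open>
  The product of the two kernels is x/(4s(t-s)) exp(-a x^2) with a = t/(4s(t-s)), whose
  x-integral over [0,1] is (1 - exp(-a))/(2t) in closed form. Exchanging the two integrals
  (Tonelli, the integrand being nonnegative) the integral of the convolution becomes the
  average over s \<in> [0,t] of (1 - exp(-a))/2. Since 4s(t-s) \<le> t^2 we have a \<ge> 1/t,
  so this average differs from 1/2 by at most exp(-1/t)/2, which is O(t^N) for every N.
\<close>

lemma integrable_on_atLeastAtMost_if_bounded_borel:
  fixes f :: "real \<Rightarrow> real"
  assumes f: "f \<in> borel_measurable borel" and bound: "\<And>x. x \<in> {a..b} \<Longrightarrow> \<bar>f x\<bar> \<le> B"
  shows "f integrable_on {a..b}"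
proof (rule measurable_bounded_by_integrable_imp_integrable_real[OF _ _ bound])
  show "f \<in> borel_measurable (lebesgue_on {a..b})"
    using f by (simp add: measurable_completion measurable_restrict_space1)
qed auto

lemma has_integral_swap_nonneg:
  fixes F :: "'a::euclidean_space \<Rightarrow> 'b::euclidean_space \<Rightarrow> real"
  assumes F_meas: "(\<lambda>(x, y). F x y) \<in> borel_measurable (lborel \<Otimes>\<^sub>M lborel)"
    and A: "A \<in> sets borel" and B: "B \<in> sets borel"
    and F_nonneg: "\<And>x y. x \<in> A \<Longrightarrow> y \<in> B \<Longrightarrow> 0 \<le> F x y"
    and F_x: "\<And>x. x \<in> A \<Longrightarrow> (F x has_integral g x) B"
    and F_y: "\<And>y. y \<in> B \<Longrightarrow> ((\<lambda>x. F x y) has_integral h y) A"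
    and h: "(h has_integral V) B"
  shows "(g has_integral V) A"
proof -
  note [measurable] = F_meas A B
  define G where "G x = (\<integral>\<^sup>+y. ennreal (F x y) * indicator B y \<partial>lborel)" for x
  have G_meas: "G \<in> borel_measurable borel"
    unfolding G_def by measurable
  have G_eq: "G x = ennreal (g x)" if "x \<in> A" for x
    unfolding G_def using that F_nonneg F_x by (intro nn_integral_has_integral_lebesgue') auto
  have g_nonneg: "0 \<le> g x" if "x \<in> A" for x
    using has_integral_nonneg[OF F_x[OF that]] F_nonneg that by auto
  have h_nonneg: "0 \<le> h y" if "y \<in> B" for y
    using has_integral_nonneg[OF F_y[OF that]] F_nonneg that by auto
  have V_nonneg: "0 \<le> V"
    using has_integral_nonneg[OF h] h_nonneg by auto
  have "(\<integral>\<^sup>+x. ennreal (indicator A x * g x) \<partial>lborel) = (\<integral>\<^sup>+x. G x * indicator A x \<partial>lborel)"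
    by (intro nn_integral_cong) (simp add: G_eq split: split_indicator)
  also have "\<dots> = (\<integral>\<^sup>+x. (\<integral>\<^sup>+y. ennreal (F x y) * indicator B y * indicator A x \<partial>lborel) \<partial>lborel)"
    unfolding G_def by (intro nn_integral_cong nn_integral_multc[symmetric]) measurable
  also have "\<dots> = (\<integral>\<^sup>+y. (\<integral>\<^sup>+x. ennreal (F x y) * indicator B y * indicator A x \<partial>lborel) \<partial>lborel)"
    by (intro lborel_pair.Fubini'[symmetric]) measurable
  also have "\<dots> = (\<integral>\<^sup>+y. ennreal (h y) * indicator B y \<partial>lborel)"
  proof (intro nn_integral_cong)
    fix y
    have "(\<integral>\<^sup>+x. ennreal (F x y) * indicator A x \<partial>lborel) = ennreal (h y)" if "y \<in> B"
      using that F_nonneg F_y by (intro nn_integral_has_integral_lebesgue') auto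
    then show "(\<integral>\<^sup>+x. ennreal (F x y) * indicator B y * indicator A x \<partial>lborel)
        = ennreal (h y) * indicator B y"
      by (simp split: split_indicator)
  qed
  also have "\<dots> = ennreal V"
    using h_nonneg h by (rule nn_integral_has_integral_lebesgue')
  finally have nn: "(\<integral>\<^sup>+x. ennreal (indicator A x * g x) \<partial>lborel) = ennreal V" .
  have "(\<lambda>x. indicator A x * g x) \<in> borel_measurable borel"
  proof (rule measurable_cong[THEN iffD1])
    show "indicator A x * enn2real (G x) = indicator A x * g x" if "x \<in> space borel" for x
      using G_eq g_nonneg by (simp split: split_indicator)
    show "(\<lambda>x. indicator A x * enn2real (G x)) \<in> borel_measurable borel"
      using G_meas by measurable
  qed
  then have "((\<lambda>x. indicator A x * g x) has_integral V) UNIV"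
    using nn V_nonneg g_nonneg by (intro nn_integral_has_integral) (auto split: split_indicator)
  moreover have "(\<lambda>x. indicator A x * g x) = (\<lambda>x. if x \<in> A then g x else 0)"
    by (simp add: fun_eq_iff)
  ultimately show ?thesis
    by (simp add: has_integral_restrict_UNIV)
qed

lemma has_integral_x_exp_neg_square:
  fixes a :: real
  shows "((\<lambda>x. a * x * exp (- a * x\<^sup>2)) has_integral (1 - exp (- a)) / 2) {0..1}"
proof -
  have "((\<lambda>x. a * x * exp (- a * x\<^sup>2)) has_integral
      (- exp (- a * 1\<^sup>2) / 2) - (- exp (- a * 0\<^sup>2) / 2)) {0..1}"
  proof (rule fundamental_theorem_of_calculus)
    fix x :: real
    have "((\<lambda>x. - exp (- a * x\<^sup>2) / 2) has_real_derivative a * x * exp (- a * x\<^sup>2))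
        (at x within {0..1})"
      by (auto intro!: derivative_eq_intros simp: algebra_simps)
    then show "((\<lambda>x. - exp (- a * x\<^sup>2) / 2) has_vector_derivative a * x * exp (- a * x\<^sup>2))
        (at x within {0..1})"
      by (simp add: has_real_derivative_iff_has_vector_derivative)
  qed simp
  then show ?thesis
    by (simp add: diff_divide_distrib)
qed

text \<open>At s = 0 and s = t the denominator vanishes and the rate is the junk value 0;
  the product formula below then still holds on all of [0,t], both sides being 0.\<close>
definition NEp_rate :: "real \<Rightarrow> real \<Rightarrow> real" where
  "NEp_rate t s = t / (4 * s * (t - s))"

lemma NEp_mult_NEp:
  assumes "x \<ge> 0" "t > 0"
  shows "NEp x (t - s) * NEp x s = NEp_rate t s / t * x * exp (- NEp_rate t s * x\<^sup>2)"
proof (cases "s = 0 \<or> s = t")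
  case True
  then show ?thesis
    by (auto simp: NEp_def NEp_rate_def)
next
  case False
  then have s: "s \<noteq> 0" "4 * t - 4 * s \<noteq> 0"
    by auto
  have exponent: "- x\<^sup>2 / (4 * (t - s)) + - x\<^sup>2 / (4 * s) = - NEp_rate t s * x\<^sup>2"
    using s by (simp add: NEp_rate_def field_simps)
  have "NEp x (t - s) * NEp x s
      = (sqrt x * sqrt x) / (4 * s * (t - s)) * (exp (- x\<^sup>2 / (4 * (t - s))) * exp (- x\<^sup>2 / (4 * s)))"
    unfolding NEp_def using s by (simp add: field_simps)
  also have "\<dots> = x / (4 * s * (t - s)) * exp (- NEp_rate t s * x\<^sup>2)"
    unfolding exp_add[symmetric] exponent using assms by simp
  finally show ?thesis
    using assms by (simp add: NEp_rate_def)
qed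

lemma NEp_rate_nonneg: "t > 0 \<Longrightarrow> s \<in> {0..t} \<Longrightarrow> 0 \<le> NEp_rate t s"
  by (auto simp: NEp_rate_def intro!: divide_nonneg_nonneg)

lemma inverse_le_NEp_rate:
  assumes t: "t > 0" and s: "s \<in> {0<..<t}"
  shows "1 / t \<le> NEp_rate t s"
proof -
  have "4 * s * (t - s) = t\<^sup>2 - (t - 2 * s)\<^sup>2"
    by (simp add: power2_eq_square algebra_simps)
  then have "4 * s * (t - s) \<le> t\<^sup>2"
    by simp
  moreover have "4 * s * (t - s) > 0"
    using s by auto
  ultimately show ?thesis
    using t by (simp add: NEp_rate_def field_simps power2_eq_square)
qed

lemma NEp_mult_NEp_nonneg: "t > 0 \<Longrightarrow> x \<ge> 0 \<Longrightarrow> s \<in> {0..t} \<Longrightarrow> 0 \<le> NEp x (t - s) * NEp x s"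
  using NEp_mult_NEp[of x t s] NEp_rate_nonneg[of t s] by simp

lemma NEp_mult_NEp_le:
  assumes "t > 0" "x \<ge> 0" "s \<in> {0..t}"
  shows "NEp x (t - s) * NEp x s \<le> 1 / (t * x)"
proof (cases "x = 0")
  case True
  then show ?thesis
    by (simp add: NEp_def)
next
  case False
  let ?a = "NEp_rate t s"
  have "?a * x\<^sup>2 \<le> exp (?a * x\<^sup>2)"
    using exp_ge_add_one_self[of "?a * x\<^sup>2"] by linarith
  then have "?a * x\<^sup>2 * exp (- ?a * x\<^sup>2) \<le> 1"
    by (simp add: exp_minus field_simps)
  then have "?a / t * x * exp (- ?a * x\<^sup>2) \<le> 1 / (t * x)"
    using False assms by (simp add: field_simps power2_eq_square)
  then show ?thesis
    using NEp_mult_NEp assms by simp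
qed

lemma NEp_mult_NEp_measurable:
  "(\<lambda>(x, s). NEp x (t - s) * NEp x s) \<in> borel_measurable (lborel \<Otimes>\<^sub>M lborel)"
  unfolding NEp_def by measurable

lemma NEp_mult_NEp_has_integral_time:
  assumes "t > 0" "x \<ge> 0"
  shows "((\<lambda>s. NEp x (t - s) * NEp x s) has_integral NEp_conv x t) {0..t}"
proof -
  have "(\<lambda>s. NEp x (t - s) * NEp x s) integrable_on {0..t}"
  proof (rule integrable_on_atLeastAtMost_if_bounded_borel)
    show "(\<lambda>s. NEp x (t - s) * NEp x s) \<in> borel_measurable borel"
      unfolding NEp_def by measurable
    show "\<bar>NEp x (t - s) * NEp x s\<bar> \<le> 1 / (t * x)" if "s \<in> {0..t}" for s
      using assms that NEp_mult_NEp_nonneg NEp_mult_NEp_le by simp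
  qed
  then show ?thesis
    unfolding NEp_conv_def by (rule integrable_integral)
qed

lemma NEp_mult_NEp_has_integral_space:
  assumes t: "t > 0" and s: "s \<in> {0..t}"
  shows "((\<lambda>x. NEp x (t - s) * NEp x s) has_integral (1 - exp (- NEp_rate t s)) / (2 * t)) {0..1}"
proof -
  have "((\<lambda>x. 1 / t * (NEp_rate t s * x * exp (- NEp_rate t s * x\<^sup>2)))
      has_integral 1 / t * ((1 - exp (- NEp_rate t s)) / 2)) {0..1}"
    by (intro has_integral_mult_right has_integral_x_exp_neg_square)
  then have "((\<lambda>x. 1 / t * (NEp_rate t s * x * exp (- NEp_rate t s * x\<^sup>2)))
      has_integral (1 - exp (- NEp_rate t s)) / (2 * t)) {0..1}"
    by (simp add: field_simps)
  then show ?thesis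
    by (rule has_integral_eq[rotated]) (use t in \<open>auto simp: NEp_mult_NEp\<close>)
qed

lemma NEp_conv_integral_as_average:
  assumes t: "t > 0"
  shows "((\<lambda>s. (1 - exp (- NEp_rate t s)) / (2 * t)) has_integral integral {0..1} (\<lambda>x. NEp_conv x t)) {0..t}"
proof -
  define h where "h s = (1 - exp (- NEp_rate t s)) / (2 * t)" for s
  have "h integrable_on {0..t}"
  proof (rule integrable_on_atLeastAtMost_if_bounded_borel)
    show "h \<in> borel_measurable borel"
      unfolding h_def NEp_rate_def by measurable
    show "\<bar>h s\<bar> \<le> 1 / (2 * t)" if "s \<in> {0..t}" for s
      using t NEp_rate_nonneg[OF t that] by (simp add: h_def divide_simps)
  qed
  then have h: "(h has_integral integral {0..t} h) {0..t}"
    by (rule integrable_integral)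
  have "((\<lambda>x. NEp_conv x t) has_integral integral {0..t} h) {0..1}"
  proof (rule has_integral_swap_nonneg[where F = "\<lambda>x s. NEp x (t - s) * NEp x s", OF _ _ _ _ _ _ h])
    show "(\<lambda>(x, s). NEp x (t - s) * NEp x s) \<in> borel_measurable (lborel \<Otimes>\<^sub>M lborel)"
      by (rule NEp_mult_NEp_measurable)
    show "0 \<le> NEp x (t - s) * NEp x s" if "x \<in> {0..1}" "s \<in> {0..t}" for x s
      using t that by (simp add: NEp_mult_NEp_nonneg)
    show "((\<lambda>s. NEp x (t - s) * NEp x s) has_integral NEp_conv x t) {0..t}" if "x \<in> {0..1}" for x
      using t that by (simp add: NEp_mult_NEp_has_integral_time)
    show "((\<lambda>x. NEp x (t - s) * NEp x s) has_integral h s) {0..1}" if "s \<in> {0..t}" for s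
      unfolding h_def using t that by (rule NEp_mult_NEp_has_integral_space)
  qed auto
  then have "integral {0..1} (\<lambda>x. NEp_conv x t) = integral {0..t} h"
    by (rule integral_unique)
  with h show ?thesis
    unfolding h_def by simp
qed

lemma integral_NEp_conv_error:
  assumes t: "t > 0"
  shows "\<bar>integral {0..1} (\<lambda>x. NEp_conv x t) - 1 / 2\<bar> \<le> exp (- 1 / t) / 2"
proof -
  have diff: "((\<lambda>s. (1 - exp (- NEp_rate t s)) / (2 * t) - 1 / (2 * t)) has_integral
      integral {0..1} (\<lambda>x. NEp_conv x t) - 1 / 2) {0..t}"
    using has_integral_diff[OF NEp_conv_integral_as_average[OF t]
        has_integral_const_real[of "1 / (2 * t)" 0 t]] t by simp
  have "norm (integral {0..1} (\<lambda>x. NEp_conv x t) - 1 / 2)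
      \<le> exp (- 1 / t) / (2 * t) * measure lborel {0..t}"
  proof (rule has_integral_bound_real[where S = "{0, t}", OF _ _ diff])
    fix s assume "s \<in> {0..t} - {0, t}"
    then have "1 / t \<le> NEp_rate t s"
      using inverse_le_NEp_rate[OF t] by auto
    then show "norm ((1 - exp (- NEp_rate t s)) / (2 * t) - 1 / (2 * t)) \<le> exp (- 1 / t) / (2 * t)"
      using t by (simp add: divide_simps)
  qed (use t in auto)
  then show ?thesis
    using t by simp
qed

theorem proposition6p1:
  fixes N :: nat
  shows "(\<lambda>t. integral {0..1} (\<lambda>x. NEp_conv x t) - 1/2) \<in> O[at_right 0](\<lambda>t. t ^ N)"
proof -
  have "(\<lambda>t. integral {0..1} (\<lambda>x. NEp_conv x t) - 1/2) \<in> O[at_right 0](\<lambda>t. exp (- 1 / t) / 2)"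
  proof (rule bigoI[where c = 1], rule eventually_mono[OF eventually_at_right_less])
    show "norm (integral {0..1} (\<lambda>x. NEp_conv x t) - 1 / 2) \<le> 1 * norm (exp (- 1 / t) / 2)"
      if "0 < t" for t :: real
      using integral_NEp_conv_error[OF that] by simp
  qed
  also have "(\<lambda>t::real. exp (- 1 / t) / 2) \<in> O[at_right 0](\<lambda>t. t ^ N)"
    by real_asymp
  finally show ?thesis .
qed

end
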